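(* Let $(A,\mu,\alpha_A,\varepsilon)$ be a commutative color Hom-associative algebra and $(\mathfrak g,[\cdot,\cdot]_{\mathfrak g},\alpha_{\mathfrak g},\varepsilon)$ a color Hom-Lie algebra (same $\Gamma$ and $\varepsilon$). (i) The $\Gamma$-graded space $\mathfrak g\otimes A$ with $\alpha(x\otimes a)=\alpha_{\mathfrak g}(x)\otimes\alpha_A(a)$ and $[x\otimes a,y\otimes b]=\varepsilon(a,y)[x,y]_{\mathfrak g}\otimes\mu(a,b)$ (homogeneous $x,y\in\mathfrak g$, $a,b\in A$) is a color Hom-Lie algebra. (ii) If $B_A$ is an associative scalar product on $A$ and $B_{\mathfrak g}$ is an invariant scalar product on $\mathfrak g$, then $(\mathfrak g\otimes A,[\cdot,\cdot],\alpha,\varepsilon,B)$ is a quadratic color Hom-Lie algebra, where $B(x\otimes a,y\otimes b)=\varepsilon(a,y)B_{\mathfrak g}(x,y)B_A(a,b)$.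
   Context: $\mathbb K$ is a field of characteristic zero and $\Gamma$ an abelian group. A bicharacter is a map $\varepsilon:\Gamma\times\Gamma\to\mathbb K\setminus\{0\}$ with $\varepsilon(a,b)\varepsilon(b,a)=1$, $\varepsilon(a,b+c)=\varepsilon(a,b)\varepsilon(a,c)$, $\varepsilon(a+b,c)=\varepsilon(a,c)\varepsilon(b,c)$; for homogeneous elements $\varepsilon(x,y)=\varepsilon(\deg x,\deg y)$. The tensor product is graded by $(V\otimes W)_\delta=\sum_{\gamma+\gamma'=\delta}V_\gamma\otimes W_{\gamma'}$. A color Hom-Lie algebra $(\mathfrak g,[\cdot,\cdot],\alpha,\varepsilon)$: $\Gamma$-graded space, even bilinear bracket, even linear $\alpha$, with $[x,y]=-\varepsilon(x,y)[y,x]$ and $\varepsilon(z,x)[\alpha(x),[y,z]]+\varepsilon(x,y)[\alpha(y),[z,x]]+\varepsilon(y,z)[\alpha(z),[x,y]]=0$. A color Hom-associative algebra $(A,\mu,\alpha_A,\varepsilon)$: $\Gamma$-graded space with even bilinear $\mu$ and even linear $\alpha_A$, $\mu(\alpha_A(a),\mu(b,c))=\mu(\mu(a,b),\alpha_A(c))$; commutative means $\mu(a,b)=\varepsilon(a,b)\mu(b,a)$. An associative scalar product on $A$ is a nondegenerate $\varepsilon$-symmetric ($B_A(a,b)=\varepsilon(a,b)B_A(b,a)$) bilinear form with $B_A(\mu(a,b),c)=B_A(a,\mu(b,c))$ and $B_A(\alpha_A(a),b)=B_A(a,\alpha_A(b))$. An invariant scalar product on $\mathfrak g$ is a nondegenerate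 $\varepsilon$-symmetric bilinear form with $B_{\mathfrak g}([x,y],z)=B_{\mathfrak g}(x,[y,z])$ and $B_{\mathfrak g}(\alpha_{\mathfrak g}(x),y)=B_{\mathfrak g}(x,\alpha_{\mathfrak g}(y))$. A quadratic color Hom-Lie algebra is one equipped with such a form. *)

theory Defs
  imports Main "HOL.Vector_Spaces"
begin

text \<open>Vector spaces over a field 'k are given by scalar multiplications s :: 'k => 'v => 'v
  satisfying the library locale vector_space. Gradings by an abelian group 'c are given by
  families of subspaces V :: 'c => 'v set.\<close>

definition bicharacter :: "('c::ab_group_add \<Rightarrow> 'c \<Rightarrow> 'k::field) \<Rightarrow> bool" where
  "bicharacter eps \<longleftrightarrow>
     (\<forall>a b. eps a b \<noteq> 0) \<and>
     (\<forall>a b. eps a b * eps b a = 1) \<and>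
     (\<forall>a b c. eps a (b + c) = eps a b * eps a c) \<and>
     (\<forall>a b c. eps (a + b) c = eps a c * eps b c)"

definition bilinear_map ::
  "('k::field \<Rightarrow> 'u::ab_group_add \<Rightarrow> 'u) \<Rightarrow> ('k \<Rightarrow> 'v::ab_group_add \<Rightarrow> 'v) \<Rightarrow> ('k \<Rightarrow> 'w::ab_group_add \<Rightarrow> 'w)
     \<Rightarrow> ('u \<Rightarrow> 'v \<Rightarrow> 'w) \<Rightarrow> bool" where
  "bilinear_map s1 s2 s3 f \<longleftrightarrow>
     (\<forall>x. Vector_Spaces.linear s2 s3 (f x)) \<and> (\<forall>y. Vector_Spaces.linear s1 s3 (\<lambda>x. f x y))"

definition graded_space ::
  "('k::field \<Rightarrow> 'v::ab_group_add \<Rightarrow> 'v) \<Rightarrow> ('c \<Rightarrow> 'v set) \<Rightarrow> bool" where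
  "graded_space s V \<longleftrightarrow>
     vector_space s \<and> (\<forall>g. module.subspace s (V g)) \<and>
     (\<forall>v. \<exists>!f. finite {g. f g \<noteq> 0} \<and> (\<forall>g. f g \<in> V g) \<and> v = (\<Sum>g\<in>{g. f g \<noteq> 0}. f g))"

definition color_hom_lie ::
  "('k::field \<Rightarrow> 'v::ab_group_add \<Rightarrow> 'v) \<Rightarrow> ('c::ab_group_add \<Rightarrow> 'v set)
     \<Rightarrow> ('v \<Rightarrow> 'v \<Rightarrow> 'v) \<Rightarrow> ('v \<Rightarrow> 'v) \<Rightarrow> ('c \<Rightarrow> 'c \<Rightarrow> 'k) \<Rightarrow> bool" where
  "color_hom_lie s V br al eps \<longleftrightarrow>
     graded_space s V \<and> bilinear_map s s s br \<and> Vector_Spaces.linear s s al \<and>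
     (\<forall>g h x y. x \<in> V g \<longrightarrow> y \<in> V h \<longrightarrow> br x y \<in> V (g + h)) \<and>
     (\<forall>g x. x \<in> V g \<longrightarrow> al x \<in> V g) \<and>
     (\<forall>g h x y. x \<in> V g \<longrightarrow> y \<in> V h \<longrightarrow> br x y = - s (eps g h) (br y x)) \<and>
     (\<forall>g h k x y z. x \<in> V g \<longrightarrow> y \<in> V h \<longrightarrow> z \<in> V k \<longrightarrow>
        s (eps k g) (br (al x) (br y z)) + s (eps g h) (br (al y) (br z x))
          + s (eps h k) (br (al z) (br x y)) = 0)"

definition comm_color_hom_assoc ::
  "('k::field \<Rightarrow> 'v::ab_group_add \<Rightarrow> 'v) \<Rightarrow> ('c::ab_group_add \<Rightarrow> 'v set)
     \<Rightarrow> ('v \<Rightarrow> 'v \<Rightarrow> 'v) \<Rightarrow> ('v \<Rightarrow> 'v) \<Rightarrow> ('c \<Rightarrow> 'c \<Rightarrow> 'k) \<Rightarrow> bool" where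
  "comm_color_hom_assoc s V mu al eps \<longleftrightarrow>
     graded_space s V \<and> bilinear_map s s s mu \<and> Vector_Spaces.linear s s al \<and>
     (\<forall>g h x y. x \<in> V g \<longrightarrow> y \<in> V h \<longrightarrow> mu x y \<in> V (g + h)) \<and>
     (\<forall>g x. x \<in> V g \<longrightarrow> al x \<in> V g) \<and>
     (\<forall>a b c. mu (al a) (mu b c) = mu (mu a b) (al c)) \<and>
     (\<forall>g h a b. a \<in> V g \<longrightarrow> b \<in> V h \<longrightarrow> mu a b = s (eps g h) (mu b a))"

definition eps_scalar_form ::
  "('k::field \<Rightarrow> 'v::ab_group_add \<Rightarrow> 'v) \<Rightarrow> ('c::ab_group_add \<Rightarrow> 'v set)
     \<Rightarrow> ('c \<Rightarrow> 'c \<Rightarrow> 'k) \<Rightarrow> ('v \<Rightarrow> 'v \<Rightarrow> 'k) \<Rightarrow> bool" where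
  "eps_scalar_form s V eps B \<longleftrightarrow>
     bilinear_map s s (*) B \<and>
     (\<forall>x. (\<forall>y. B x y = 0) \<longrightarrow> x = 0) \<and>
     (\<forall>g h x y. x \<in> V g \<longrightarrow> y \<in> V h \<longrightarrow> B x y = eps g h * B y x)"

definition assoc_scalar_product ::
  "('k::field \<Rightarrow> 'v::ab_group_add \<Rightarrow> 'v) \<Rightarrow> ('c::ab_group_add \<Rightarrow> 'v set)
     \<Rightarrow> ('v \<Rightarrow> 'v \<Rightarrow> 'v) \<Rightarrow> ('v \<Rightarrow> 'v) \<Rightarrow> ('c \<Rightarrow> 'c \<Rightarrow> 'k) \<Rightarrow> ('v \<Rightarrow> 'v \<Rightarrow> 'k) \<Rightarrow> bool" where
  "assoc_scalar_product s V mu al eps B \<longleftrightarrow>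
     eps_scalar_form s V eps B \<and>
     (\<forall>a b c. B (mu a b) c = B a (mu b c)) \<and>
     (\<forall>a b. B (al a) b = B a (al b))"

definition invariant_scalar_product ::
  "('k::field \<Rightarrow> 'v::ab_group_add \<Rightarrow> 'v) \<Rightarrow> ('c::ab_group_add \<Rightarrow> 'v set)
     \<Rightarrow> ('v \<Rightarrow> 'v \<Rightarrow> 'v) \<Rightarrow> ('v \<Rightarrow> 'v) \<Rightarrow> ('c \<Rightarrow> 'c \<Rightarrow> 'k) \<Rightarrow> ('v \<Rightarrow> 'v \<Rightarrow> 'k) \<Rightarrow> bool" where
  "invariant_scalar_product s V br al eps B \<longleftrightarrow>
     eps_scalar_form s V eps B \<and>
     (\<forall>x y z. B (br x y) z = B x (br y z)) \<and>
     (\<forall>x y. B (al x) y = B x (al y))"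

definition quadratic_color_hom_lie ::
  "('k::field \<Rightarrow> 'v::ab_group_add \<Rightarrow> 'v) \<Rightarrow> ('c::ab_group_add \<Rightarrow> 'v set)
     \<Rightarrow> ('v \<Rightarrow> 'v \<Rightarrow> 'v) \<Rightarrow> ('v \<Rightarrow> 'v) \<Rightarrow> ('c \<Rightarrow> 'c \<Rightarrow> 'k) \<Rightarrow> ('v \<Rightarrow> 'v \<Rightarrow> 'k) \<Rightarrow> bool" where
  "quadratic_color_hom_lie s V br al eps B \<longleftrightarrow>
     color_hom_lie s V br al eps \<and> invariant_scalar_product s V br al eps B"

text \<open>tp exhibits T as a tensor product of the vector spaces G and A: tp is bilinear, its image
  spans T, and pure tensors of linearly independent families are linearly independent
  (equivalently: tensors of bases form a basis). Over a field this is equivalent to the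
  universal property.\<close>
definition tensor_product ::
  "('k::field \<Rightarrow> 'g::ab_group_add \<Rightarrow> 'g) \<Rightarrow> ('k \<Rightarrow> 'a::ab_group_add \<Rightarrow> 'a)
     \<Rightarrow> ('k \<Rightarrow> 't::ab_group_add \<Rightarrow> 't) \<Rightarrow> ('g \<Rightarrow> 'a \<Rightarrow> 't) \<Rightarrow> bool" where
  "tensor_product sg sa st tp \<longleftrightarrow>
     vector_space sg \<and> vector_space sa \<and> vector_space st \<and>
     bilinear_map sg sa st tp \<and>
     module.span st (range (case_prod tp)) = UNIV \<and>
     (\<forall>X Y. \<not> module.dependent sg X \<longrightarrow> \<not> module.dependent sa Y \<longrightarrow>
        inj_on (case_prod tp) (X \<times> Y) \<and> \<not> module.dependent st (case_prod tp ` (X \<times> Y)))"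

definition tensor_grading ::
  "('k::field \<Rightarrow> 't::ab_group_add \<Rightarrow> 't) \<Rightarrow> ('g \<Rightarrow> 'a \<Rightarrow> 't)
     \<Rightarrow> ('c::ab_group_add \<Rightarrow> 'g set) \<Rightarrow> ('c \<Rightarrow> 'a set) \<Rightarrow> 'c \<Rightarrow> 't set" where
  "tensor_grading st tp VG VA d =
     module.span st {tp x a | x a g h. g + h = d \<and> x \<in> VG g \<and> a \<in> VA h}"

definition tensor_bracket ::
  "('k::field \<Rightarrow> 't::ab_group_add \<Rightarrow> 't) \<Rightarrow> ('g \<Rightarrow> 'a \<Rightarrow> 't)
     \<Rightarrow> ('c::ab_group_add \<Rightarrow> 'g set) \<Rightarrow> ('c \<Rightarrow> 'a set) \<Rightarrow> ('c \<Rightarrow> 'c \<Rightarrow> 'k)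
     \<Rightarrow> ('g \<Rightarrow> 'g \<Rightarrow> 'g) \<Rightarrow> ('a \<Rightarrow> 'a \<Rightarrow> 'a) \<Rightarrow> ('t \<Rightarrow> 't \<Rightarrow> 't) \<Rightarrow> bool" where
  "tensor_bracket st tp VG VA eps brg mu br \<longleftrightarrow>
     bilinear_map st st st br \<and>
     (\<forall>g1 h1 g2 h2 x a y b. x \<in> VG g1 \<longrightarrow> a \<in> VA h1 \<longrightarrow> y \<in> VG g2 \<longrightarrow> b \<in> VA h2 \<longrightarrow>
        br (tp x a) (tp y b) = st (eps h1 g2) (tp (brg x y) (mu a b)))"

definition tensor_twist ::
  "('k::field \<Rightarrow> 't::ab_group_add \<Rightarrow> 't) \<Rightarrow> ('g \<Rightarrow> 'a \<Rightarrow> 't)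
     \<Rightarrow> ('g \<Rightarrow> 'g) \<Rightarrow> ('a \<Rightarrow> 'a) \<Rightarrow> ('t \<Rightarrow> 't) \<Rightarrow> bool" where
  "tensor_twist st tp alg alA al \<longleftrightarrow>
     Vector_Spaces.linear st st al \<and> (\<forall>x a. al (tp x a) = tp (alg x) (alA a))"

definition tensor_form ::
  "('k::field \<Rightarrow> 't::ab_group_add \<Rightarrow> 't) \<Rightarrow> ('g \<Rightarrow> 'a \<Rightarrow> 't)
     \<Rightarrow> ('c::ab_group_add \<Rightarrow> 'g set) \<Rightarrow> ('c \<Rightarrow> 'a set) \<Rightarrow> ('c \<Rightarrow> 'c \<Rightarrow> 'k)
     \<Rightarrow> ('g \<Rightarrow> 'g \<Rightarrow> 'k) \<Rightarrow> ('a \<Rightarrow> 'a \<Rightarrow> 'k) \<Rightarrow> ('t \<Rightarrow> 't \<Rightarrow> 'k) \<Rightarrow> bool" where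
  "tensor_form st tp VG VA eps BG BA B \<longleftrightarrow>
     bilinear_map st st (*) B \<and>
     (\<forall>g1 h1 g2 h2 x a y b. x \<in> VG g1 \<longrightarrow> a \<in> VA h1 \<longrightarrow> y \<in> VG g2 \<longrightarrow> b \<in> VA h2 \<longrightarrow>
        B (tp x a) (tp y b) = eps h1 g2 * BG x y * BA a b)"

end

theory Submission
  imports Defs
begin

text \<open>On pure tensors of homogeneous elements, which span every graded piece of
  $\mathfrak g \otimes A$ as well as the whole space, the bracket, the twist and the form are given
  by explicit formulas, and each axiom of a quadratic color Hom-Lie algebra reduces to the
  corresponding axioms of $\mathfrak g$ and $A$ once the bicharacter factors are collected.
  Existence of the bracket, twist and form, the direct-sum property of the grading and
  nondegeneracy of the form are proved with the tensor basis built from homogeneous bases of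
  $\mathfrak g$ and $A$.\<close>

section \<open>Linear and bilinear maps\<close>

lemma vector_space_field: "vector_space ((*) :: 'k::field \<Rightarrow> 'k \<Rightarrow> 'k)"
  by unfold_locales (simp_all add: algebra_simps)

lemma linear_compose_add:
  "Vector_Spaces.linear s1 s2 f \<Longrightarrow> Vector_Spaces.linear s1 s2 g \<Longrightarrow>
    Vector_Spaces.linear s1 s2 (\<lambda>x. f x + g x)"
  by (metis linear_iff vector_space_pair.intro vector_space_pair.linear_compose_add)

lemma linear_compose_neg:
  "Vector_Spaces.linear s1 s2 f \<Longrightarrow> Vector_Spaces.linear s1 s2 (\<lambda>x. - f x)"
  by (metis linear_iff vector_space_pair.intro vector_space_pair.linear_compose_neg)

lemma linear_compose_scale_right:
  "Vector_Spaces.linear s1 s2 f \<Longrightarrow> Vector_Spaces.linear s1 s2 (\<lambda>x. s2 c (f x))"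
  by (metis linear_iff vector_space_pair.intro vector_space_pair.linear_compose_scale_right)

lemma linear_zero: "vector_space s1 \<Longrightarrow> vector_space s2 \<Longrightarrow> Vector_Spaces.linear s1 s2 (\<lambda>x. 0)"
  by (metis vector_space_pair.intro vector_space_pair.linear_zero)

lemmas linear_compose_lambda = Vector_Spaces.linear_compose[unfolded comp_def]

lemma bilinear_map_linear_left: "bilinear_map s1 s2 s3 f \<Longrightarrow> Vector_Spaces.linear s1 s3 (\<lambda>x. f x y)"
  by (simp add: bilinear_map_def)

lemma bilinear_map_linear_right: "bilinear_map s1 s2 s3 f \<Longrightarrow> Vector_Spaces.linear s2 s3 (f x)"
  by (simp add: bilinear_map_def)

lemma linear_bilinear_map_left:
  "bilinear_map s1 s2 s3 f \<Longrightarrow> Vector_Spaces.linear s0 s1 g \<Longrightarrow>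
    Vector_Spaces.linear s0 s3 (\<lambda>x. f (g x) y)"
  by (rule linear_compose_lambda[of s0 s1 g s3 "\<lambda>x. f x y"]) (simp_all add: bilinear_map_def)

lemma linear_bilinear_map_right:
  "bilinear_map s1 s2 s3 f \<Longrightarrow> Vector_Spaces.linear s0 s2 g \<Longrightarrow>
    Vector_Spaces.linear s0 s3 (\<lambda>x. f y (g x))"
  by (rule linear_compose_lambda[of s0 s2 g s3 "f y"]) (simp_all add: bilinear_map_def)

lemma bilinear_map_compose_linear:
  "bilinear_map s1 s2 s3 f \<Longrightarrow> Vector_Spaces.linear r1 s1 g \<Longrightarrow> Vector_Spaces.linear r2 s2 h \<Longrightarrow>
    bilinear_map r1 r2 s3 (\<lambda>x y. f (g x) (h y))"
  by (simp add: bilinear_map_def linear_bilinear_map_left linear_bilinear_map_right)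

lemma linear_compose_bilinear_map:
  "Vector_Spaces.linear s3 s4 \<phi> \<Longrightarrow> bilinear_map s1 s2 s3 f \<Longrightarrow>
    bilinear_map s1 s2 s4 (\<lambda>x y. \<phi> (f x y))"
  by (auto simp add: bilinear_map_def intro: linear_compose_lambda[where g = \<phi>])

lemma bilinear_map_swap: "bilinear_map s1 s2 s3 f \<Longrightarrow> bilinear_map s2 s1 s3 (\<lambda>y x. f x y)"
  by (simp add: bilinear_map_def)

lemma bilinear_map_times: "bilinear_map (*) (*) (*) ((*) :: 'k::field \<Rightarrow> 'k \<Rightarrow> 'k)"
  by (simp add: bilinear_map_def linear_iff vector_space_field algebra_simps)

lemma linear_map_into_subspace:
  assumes f: "Vector_Spaces.linear s1 s2 f" and W: "module.subspace s2 W"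
    and x: "x \<in> module.span s1 X" and X: "\<And>a. a \<in> X \<Longrightarrow> f a \<in> W"
  shows "f x \<in> W"
proof -
  interpret linear s1 s2 f by (fact f)
  have "vs1.subspace {x. f x \<in> W}" by (rule subspace_linear_preimage) (fact W)
  then show ?thesis using vs1.span_induct[OF x, of "\<lambda>x. f x \<in> W"] X by auto
qed

lemma bilinear_map_into_subspace:
  assumes f: "bilinear_map s1 s2 s3 f" and W: "module.subspace s3 W"
    and x: "x \<in> module.span s1 X" and y: "y \<in> module.span s2 Y"
    and XY: "\<And>a b. a \<in> X \<Longrightarrow> b \<in> Y \<Longrightarrow> f a b \<in> W"
  shows "f x y \<in> W"
proof -
  have "f a y \<in> W" if "a \<in> X" for a
    using linear_map_into_subspace[OF bilinear_map_linear_right[OF f] W y] XY that by blast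
  then show ?thesis
    using linear_map_into_subspace[OF bilinear_map_linear_left[OF f] W x] by blast
qed

lemma linear_eq_on_span:
  assumes "Vector_Spaces.linear s1 s2 f" "Vector_Spaces.linear s1 s2 g" "x \<in> module.span s1 X"
    "\<And>a. a \<in> X \<Longrightarrow> f a = g a"
  shows "f x = g x"
proof -
  interpret vector_space_pair s1 s2
    using assms(1) by (simp add: linear_iff vector_space_pair_def)
  show ?thesis using linear_eq_on[OF assms] .
qed

lemma bilinear_map_eq_on_span:
  assumes "bilinear_map s1 s2 s3 f" "bilinear_map s1 s2 s3 g"
    and "x \<in> module.span s1 X" "y \<in> module.span s2 Y"
    and "\<And>a b. a \<in> X \<Longrightarrow> b \<in> Y \<Longrightarrow> f a b = g a b"
  shows "f x y = g x y"
proof -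
  have "f a y = g a y" if "a \<in> X" for a
    using assms that by (intro linear_eq_on_span[of s2 s3 "f a" "g a" y Y] bilinear_map_linear_right)
  then show ?thesis
    using assms by (intro linear_eq_on_span[of s1 s3 "\<lambda>a. f a y" "\<lambda>a. g a y" x X] bilinear_map_linear_left)
qed

lemma trilinear_eq_on_span:
  assumes "x \<in> module.span s1 X" "y \<in> module.span s2 Y" "z \<in> module.span s3 Z"
    and "\<And>a b c. a \<in> X \<Longrightarrow> b \<in> Y \<Longrightarrow> c \<in> Z \<Longrightarrow> f a b c = g a b c"
    and "\<And>y z. Vector_Spaces.linear s1 s (\<lambda>x. f x y z)" "\<And>y z. Vector_Spaces.linear s1 s (\<lambda>x. g x y z)"
    and "\<And>x z. Vector_Spaces.linear s2 s (\<lambda>y. f x y z)" "\<And>x z. Vector_Spaces.linear s2 s (\<lambda>y. g x y z)"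
    and "\<And>x y. Vector_Spaces.linear s3 s (f x y)" "\<And>x y. Vector_Spaces.linear s3 s (g x y)"
  shows "f x y z = g x y z"
proof -
  have "f x y c = g x y c" if "c \<in> Z" for c
    using assms that
    by (intro bilinear_map_eq_on_span[of s1 s2 s "\<lambda>x y. f x y c" "\<lambda>x y. g x y c" x X y Y])
       (simp_all add: bilinear_map_def)
  then show ?thesis using assms(3,9,10) by (intro linear_eq_on_span[of s3 s "f x y" "g x y" z Z])
qed

lemma bilinear_pairs_eq_on_span:
  assumes "x \<in> module.span s1 X" "a \<in> module.span s2 Y" "y \<in> module.span s1 X'" "b \<in> module.span s2 Y'"
    and "\<And>y b. bilinear_map s1 s2 s (\<lambda>x a. f x a y b)" "\<And>y b. bilinear_map s1 s2 s (\<lambda>x a. g x a y b)"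
    and "\<And>x a. bilinear_map s1 s2 s (f x a)" "\<And>x a. bilinear_map s1 s2 s (g x a)"
    and "\<And>x a y b. x \<in> X \<Longrightarrow> a \<in> Y \<Longrightarrow> y \<in> X' \<Longrightarrow> b \<in> Y' \<Longrightarrow> f x a y b = g x a y b"
  shows "f x a y b = g x a y b"
proof -
  have "f x' a' y b = g x' a' y b" if "x' \<in> X" "a' \<in> Y" for x' a'
    using assms that by (intro bilinear_map_eq_on_span[of s1 s2 s "f x' a'" "g x' a'" y X' b Y'])
  then show ?thesis
    using assms by (intro bilinear_map_eq_on_span[of s1 s2 s "\<lambda>x a. f x a y b" "\<lambda>x a. g x a y b" x X a Y])
qed

lemma linear_extension:
  assumes "vector_space s1" "vector_space s2" "\<not> module.dependent s1 X"
  obtains f where "Vector_Spaces.linear s1 s2 f" "\<And>x. x \<in> X \<Longrightarrow> f x = F x"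
proof -
  interpret vector_space_pair s1 s2 using assms by (simp add: vector_space_pair_def)
  show ?thesis using linear_independent_extend[OF assms(3)] that by blast
qed

lemma bilinear_map_extension:
  assumes vs: "vector_space s1" "vector_space s2" "vector_space s3"
    and X: "\<not> module.dependent s1 X" and Y: "\<not> module.dependent s2 Y"
  obtains f where "bilinear_map s1 s2 s3 f" "\<And>x y. x \<in> X \<Longrightarrow> y \<in> Y \<Longrightarrow> f x y = F x y"
proof -
  interpret P: vector_space_pair s1 s3 using vs by (simp add: vector_space_pair_def)
  interpret Q: vector_space_pair s2 s3 using vs by (simp add: vector_space_pair_def)
  define f where "f u v = P.construct X (\<lambda>x. Q.construct Y (F x) v) u" for u v
  have Q_lin: "Vector_Spaces.linear s2 s3 (Q.construct Y (F x))" for x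
    by (rule Q.linear_construct[OF Y])
  interpret Q_lin: linear s2 s3 "Q.construct Y (F x)" for x by (rule Q_lin)
  have "Vector_Spaces.linear s2 s3 (f u)" for u
    using vs by (simp add: linear_iff f_def Q_lin.add Q_lin.scale P.construct_add[OF X] P.construct_scale[OF X])
  moreover have "Vector_Spaces.linear s1 s3 (\<lambda>u. f u v)" for v
    unfolding f_def by (rule P.linear_construct[OF X])
  moreover have "f x y = F x y" if "x \<in> X" "y \<in> Y" for x y
    using that by (simp add: f_def P.construct_basis[OF X] Q.construct_basis[OF Y])
  ultimately show ?thesis using that unfolding bilinear_map_def by blast
qed

section \<open>Graded vector spaces\<close>

definition homogeneous_basis ::
  "('k::field \<Rightarrow> 'v::ab_group_add \<Rightarrow> 'v) \<Rightarrow> ('c \<Rightarrow> 'v set) \<Rightarrow> 'v set \<Rightarrow> ('v \<Rightarrow> 'c) \<Rightarrow> bool" where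
  "homogeneous_basis s V X deg \<longleftrightarrow>
     vector_space s \<and> \<not> module.dependent s X \<and> module.span s X = UNIV \<and>
     (\<forall>g. V g = module.span s {x\<in>X. deg x = g})"

lemma homogeneous_basis_mem:
  assumes "homogeneous_basis s V X deg" "x \<in> X"
  shows "x \<in> V (deg x)"
proof -
  interpret vector_space s using assms(1) unfolding homogeneous_basis_def by blast
  have "V (deg x) = span {y\<in>X. deg y = deg x}"
    using assms(1) unfolding homogeneous_basis_def by blast
  then show ?thesis using assms(2) span_base[of x "{y\<in>X. deg y = deg x}"] by blast
qed

lemma graded_space_decomposition:
  assumes "graded_space s V"
  shows "\<exists>f. finite {g. f g \<noteq> 0} \<and> (\<forall>g. f g \<in> V g) \<and> v = (\<Sum>g\<in>{g. f g \<noteq> 0}. f g)"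
  using conjunct2[OF conjunct2[OF assms[unfolded graded_space_def]]] by (intro ex1_implies_ex) (rule spec)

lemma graded_space_sum_eq_0:
  assumes gr: "graded_space s V" and D: "finite D" and z: "\<And>g. g \<in> D \<Longrightarrow> z g \<in> V g"
    and sum: "sum z D = 0" and g: "g \<in> D"
  shows "z g = 0"
proof -
  interpret vector_space s using gr by (simp add: graded_space_def)
  have sub: "subspace (V g)" for g using gr by (simp add: graded_space_def)
  let ?P = "\<lambda>f. finite {g. f g \<noteq> 0} \<and> (\<forall>g. f g \<in> V g) \<and> 0 = (\<Sum>g\<in>{g. f g \<noteq> 0}. f g)"
  define f where "f g = (if g \<in> D then z g else 0)" for g
  have supp: "{g. f g \<noteq> 0} \<subseteq> D" by (auto simp: f_def split: if_splits)
  have "(\<Sum>g\<in>{g. f g \<noteq> 0}. f g) = (\<Sum>g\<in>D. f g)"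
    by (rule sum.mono_neutral_left[OF D supp]) auto
  then have P_f: "?P f"
    using sum finite_subset[OF supp D] z sub subspace_0 by (auto simp: f_def)
  have P_0: "?P (\<lambda>_. 0)" using sub subspace_0 by auto
  have "\<exists>!f. ?P f"
    using conjunct2[OF conjunct2[OF gr[unfolded graded_space_def]]] by (rule spec)
  then have "f = (\<lambda>_. 0)"
    using the1_equality[of ?P f] the1_equality[of ?P "\<lambda>_. 0"] P_f P_0 by simp
  then show ?thesis using g by (metis f_def)
qed

lemma graded_space_disjoint:
  assumes gr: "graded_space s V" and "x \<in> V g" "x \<in> V h" "g \<noteq> h"
  shows "x = 0"
proof -
  interpret vector_space s using gr by (simp add: graded_space_def)
  have "subspace (V h)" using gr by (simp add: graded_space_def)
  define z where "z k = (if k = g then x else - x)" for k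
  have "z g = 0"
    by (rule graded_space_sum_eq_0[OF gr, of "{g, h}"])
       (use assms subspace_neg \<open>subspace (V h)\<close> in \<open>auto simp: z_def\<close>)
  then show ?thesis by (simp add: z_def)
qed

lemma graded_space_independentI:
  assumes gr: "graded_space s V" and hom: "\<And>x. x \<in> X \<Longrightarrow> x \<in> V (deg x)"
    and ind: "\<And>g. \<not> module.dependent s {x\<in>X. deg x = g}"
  shows "\<not> module.dependent s X"
proof
  interpret vector_space s using gr by (simp add: graded_space_def)
  assume "dependent X"
  then obtain T u v where T: "finite T" "T \<subseteq> X" "(\<Sum>v\<in>T. s (u v) v) = 0" "v \<in> T" "u v \<noteq> 0"
    unfolding dependent_explicit by blast
  define z where "z g = (\<Sum>w\<in>{w\<in>T. deg w = g}. s (u w) w)" for g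
  have "z g \<in> V g" for g
  proof -
    have "subspace (V g)" using gr by (simp add: graded_space_def)
    then show ?thesis
      unfolding z_def using T(2) hom by (auto intro!: subspace_sum subspace_scale)
  qed
  moreover have "sum z (deg ` T) = (\<Sum>v\<in>T. s (u v) v)"
    unfolding z_def by (rule sum.image_gen[OF T(1), symmetric])
  ultimately have "z (deg v) = 0"
    using T(1,3,4) by (intro graded_space_sum_eq_0[OF gr, of "deg ` T" z]) auto
  then have "u v = 0"
    using independentD[OF ind[of "deg v"], of "{w\<in>T. deg w = deg v}" u v] T by (auto simp: z_def)
  with T(5) show False by simp
qed

lemma graded_space_homogeneous_basis:
  assumes gr: "graded_space s V"
  obtains X deg where "homogeneous_basis s V X deg"
proof -
  interpret vector_space s using gr by (simp add: graded_space_def)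
  have sub: "subspace (V g)" for g using gr by (simp add: graded_space_def)
  have "\<forall>g. \<exists>B. B \<subseteq> V g \<and> independent B \<and> V g \<subseteq> span B"
  proof
    fix g
    obtain B where "B \<subseteq> V g" "independent B" "V g \<subseteq> span B"
      by (rule maximal_independent_subset)
    then show "\<exists>B. B \<subseteq> V g \<and> independent B \<and> V g \<subseteq> span B" by blast
  qed
  then obtain B where "\<forall>g. B g \<subseteq> V g \<and> independent (B g) \<and> V g \<subseteq> span (B g)"
    by (rule choice[THEN exE])
  then have B: "\<And>g. B g \<subseteq> V g" "\<And>g. independent (B g)" "\<And>g. V g \<subseteq> span (B g)"
    by simp_all
  have span_B: "span (B g) = V g" for g
    using B span_minimal[OF B(1) sub] by blast
  have B_disjoint: "g = h" if "x \<in> B g" "x \<in> B h" for x g h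
    using graded_space_disjoint[OF gr, of x g h] B(1,2) dependent_zero that by blast
  define X where "X = (\<Union>g. B g)"
  define deg where "deg x = (SOME g. x \<in> B g)" for x
  have deg: "deg x = g" if "x \<in> B g" for x g
    unfolding deg_def by (rule someI2[of _ g]) (use that B_disjoint in auto)
  have fibre: "{x\<in>X. deg x = g} = B g" for g
    using deg by (auto simp: X_def)
  have "v \<in> span X" for v
  proof -
    obtain f where f: "\<forall>g. f g \<in> V g" "v = (\<Sum>g\<in>{g. f g \<noteq> 0}. f g)"
      using graded_space_decomposition[OF gr] by blast
    have "f g \<in> span X" for g
      using f(1) span_B span_mono[of "B g" X] by (auto simp: X_def)
    then show ?thesis unfolding f(2) by (rule span_sum)
  qed
  moreover have "independent X"
    by (rule graded_space_independentI[OF gr, of X deg]) (use B(1,2) fibre deg in \<open>auto simp: X_def, blast\<close>)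
  ultimately have "homogeneous_basis s V X deg"
    unfolding homogeneous_basis_def using span_B fibre vector_space_axioms by auto
  then show ?thesis by (rule that)
qed

lemma span_fibres_sum_eq_0:
  assumes vs: "vector_space s" and ind: "\<not> module.dependent s X" and D: "finite D"
    and z: "\<And>g. g \<in> D \<Longrightarrow> z g \<in> module.span s {x\<in>X. deg x = g}"
    and sum: "sum z D = 0" and g: "g \<in> D"
  shows "z g = 0"
proof -
  interpret vector_space s by fact
  let ?R = "representation X"
  have zX: "z h \<in> span X" if "h \<in> D" for h
    using z[OF that] span_mono[of "{x\<in>X. deg x = h}" X] by auto
  have R_fibre: "?R (z h) b = 0" if "h \<in> D" "deg b \<noteq> h" for h b
  proof -
    have "?R (z h) = representation {x\<in>X. deg x = h} (z h)"
      using ind independent_mono z[OF that(1)] by (intro representation_extend) auto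
    then show ?thesis using representation_ne_zero[of "{x\<in>X. deg x = h}" "z h" b] that(2) by auto
  qed
  have "?R (z g) b = 0" for b
  proof (cases "deg b = g")
    case True
    have "0 = ?R (sum z D) b" using sum by (simp add: representation_zero)
    also have "\<dots> = (\<Sum>h\<in>D. ?R (z h) b)"
    proof -
      have "?R (sum z D) = (\<lambda>b. \<Sum>h\<in>D. ?R (z h) b)" by (rule representation_sum[OF ind zX])
      then show ?thesis by simp
    qed
    also have "\<dots> = ?R (z g) b"
    proof -
      have "(\<Sum>h\<in>D - {g}. ?R (z h) b) = 0"
      proof (rule sum.neutral, rule ballI)
        fix h assume "h \<in> D - {g}"
        then show "?R (z h) b = 0" using R_fibre True by auto
      qed
      then show ?thesis by (simp add: sum.remove[OF D g])
    qed
    finally show ?thesis by simp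
  next
    case False
    then show ?thesis using R_fibre[OF g] by auto
  qed
  then show ?thesis using sum_nonzero_representation_eq[OF ind zX[OF g]] by simp
qed

lemma homogeneous_basis_graded_space:
  assumes hb: "homogeneous_basis s V X deg"
  shows "graded_space s V"
proof -
  interpret vector_space s using hb unfolding homogeneous_basis_def by blast
  have ind: "independent X" and span: "span X = UNIV" and V: "\<And>g. V g = span {x\<in>X. deg x = g}"
    using hb unfolding homogeneous_basis_def by blast+
  let ?P = "\<lambda>v f. finite {g. f g \<noteq> 0} \<and> (\<forall>g. f g \<in> V g) \<and> v = (\<Sum>g\<in>{g. f g \<noteq> 0}. f g)"
  have "\<exists>f. ?P v f" for v
  proof -
    let ?R = "representation X v"
    define S where "S = {b. ?R b \<noteq> 0}"
    have S: "finite S" "S \<subseteq> X" using finite_representation representation_ne_zero by (auto simp: S_def)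
    define f where "f g = (\<Sum>b\<in>{b\<in>S. deg b = g}. s (?R b) b)" for g
    have fV: "f g \<in> V g" for g
      unfolding f_def V using S(2) by (intro span_sum span_scale span_base) auto
    have "f g = 0" if "g \<notin> deg ` S" for g
    proof -
      have "{b\<in>S. deg b = g} = {}" using that by auto
      then show ?thesis by (simp only: f_def sum.empty)
    qed
    then have supp: "{g. f g \<noteq> 0} \<subseteq> deg ` S" by blast
    have "v = (\<Sum>b\<in>S. s (?R b) b)"
      using sum_nonzero_representation_eq[OF ind, of v] span S_def by simp
    also have "\<dots> = (\<Sum>g\<in>deg ` S. f g)" unfolding f_def by (rule sum.image_gen[OF S(1)])
    also have "\<dots> = (\<Sum>g\<in>{g. f g \<noteq> 0}. f g)"
      by (rule sum.mono_neutral_right[OF finite_imageI[OF S(1)] supp]) auto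
    finally show ?thesis using fV finite_subset[OF supp finite_imageI[OF S(1)]] by blast
  qed
  moreover have "f = f'" if "?P v f" "?P v f'" for v f f'
  proof
    fix g
    define D where "D = {g. f g \<noteq> 0} \<union> {g. f' g \<noteq> 0}"
    have D: "finite D" using that by (simp add: D_def)
    have "sum f {g. f g \<noteq> 0} = sum f D"
      by (rule sum.mono_neutral_left[OF D]) (auto simp: D_def)
    moreover have "sum f' {g. f' g \<noteq> 0} = sum f' D"
      by (rule sum.mono_neutral_left[OF D]) (auto simp: D_def)
    ultimately have "v = (\<Sum>g\<in>D. f g)" "v = (\<Sum>g\<in>D. f' g)"
      using that by simp_all
    then have sum: "(\<Sum>g\<in>D. f g - f' g) = 0" by (simp add: sum_subtractf)
    have "f h - f' h \<in> span {x\<in>X. deg x = h}" for h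
      using that V by (auto intro: span_diff)
    then have "g \<in> D \<Longrightarrow> f g - f' g = 0"
      by (rule span_fibres_sum_eq_0[OF vector_space_axioms ind D _ sum])
    then show "f g = f' g" by (cases "g \<in> D") (auto simp: D_def)
  qed
  ultimately have "\<exists>!f. ?P v f" for v by blast
  then show ?thesis
    unfolding graded_space_def using V by (auto simp: vector_space_axioms)
qed

section \<open>Tensor products of graded spaces\<close>

locale graded_tensor =
  fixes sG :: "'k::field \<Rightarrow> 'g::ab_group_add \<Rightarrow> 'g" and VG :: "'c::ab_group_add \<Rightarrow> 'g set"
    and sA :: "'k \<Rightarrow> 'a::ab_group_add \<Rightarrow> 'a" and VA :: "'c \<Rightarrow> 'a set"
    and sT :: "'k \<Rightarrow> 't::ab_group_add \<Rightarrow> 't" and tp :: "'g \<Rightarrow> 'a \<Rightarrow> 't"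
    and XG :: "'g set" and degG :: "'g \<Rightarrow> 'c" and XA :: "'a set" and degA :: "'a \<Rightarrow> 'c"
  assumes tensor: "tensor_product sG sA sT tp"
    and basis_G: "homogeneous_basis sG VG XG degG"
    and basis_A: "homogeneous_basis sA VA XA degA"
begin

sublocale G: vector_space sG using basis_G unfolding homogeneous_basis_def by blast
sublocale A: vector_space sA using basis_A unfolding homogeneous_basis_def by blast
sublocale T: vector_space sT using tensor unfolding tensor_product_def by blast

abbreviation TG :: "'c \<Rightarrow> 't set" where "TG \<equiv> tensor_grading sT tp VG VA"

lemma tp_bilinear: "bilinear_map sG sA sT tp"
  using tensor unfolding tensor_product_def by blast

lemma XG_independent: "\<not> G.dependent XG" and span_XG: "G.span XG = UNIV"
  and VG_span: "VG g = G.span {e\<in>XG. degG e = g}"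
  using basis_G unfolding homogeneous_basis_def by blast+

lemma XA_independent: "\<not> A.dependent XA" and span_XA: "A.span XA = UNIV"
  and VA_span: "VA h = A.span {f\<in>XA. degA f = h}"
  using basis_A unfolding homogeneous_basis_def by blast+

lemma tp_mem_tensor_grading: "x \<in> VG g \<Longrightarrow> a \<in> VA h \<Longrightarrow> tp x a \<in> TG (g + h)"
  unfolding tensor_grading_def by (rule T.span_base) blast

definition tensor_basis :: "'t set" where "tensor_basis = case_prod tp ` (XG \<times> XA)"

lemma tp_inj_on: "inj_on (case_prod tp) (XG \<times> XA)"
  and tensor_basis_independent: "\<not> T.dependent tensor_basis"
  using tensor XG_independent XA_independent unfolding tensor_product_def tensor_basis_def by blast+

lemma span_tensor_basis: "T.span tensor_basis = UNIV"
proof -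
  have "tp x a \<in> T.span tensor_basis" for x a
    by (rule bilinear_map_into_subspace[OF tp_bilinear T.subspace_span, of x XG a XA])
       (use span_XG span_XA in \<open>auto simp: tensor_basis_def intro: T.span_base\<close>)
  then have "range (case_prod tp) \<subseteq> T.span tensor_basis" by auto
  then have "T.span (range (case_prod tp)) \<subseteq> T.span tensor_basis"
    by (simp add: T.span_minimal)
  then show ?thesis using tensor unfolding tensor_product_def by blast
qed

definition basis_index :: "'t \<Rightarrow> 'g \<times> 'a" where
  "basis_index = inv_into (XG \<times> XA) (case_prod tp)"

lemma basis_index_tp: "e \<in> XG \<Longrightarrow> f \<in> XA \<Longrightarrow> basis_index (tp e f) = (e, f)"
  unfolding basis_index_def using inv_into_f_f[OF tp_inj_on, of "(e, f)"] by simp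

definition tensor_degree :: "'t \<Rightarrow> 'c" where
  "tensor_degree p = (case basis_index p of (e, f) \<Rightarrow> degG e + degA f)"

lemma tensor_basis_linear_extension:
  assumes "vector_space s"
  obtains \<phi> where "Vector_Spaces.linear sT s \<phi>" "\<And>e f. e \<in> XG \<Longrightarrow> f \<in> XA \<Longrightarrow> \<phi> (tp e f) = F e f"
proof -
  obtain \<phi> where \<phi>: "Vector_Spaces.linear sT s \<phi>"
    and \<phi>_basis: "\<And>p. p \<in> tensor_basis \<Longrightarrow> \<phi> p = case_prod F (basis_index p)"
    by (rule linear_extension[OF T.vector_space_axioms assms tensor_basis_independent,
          where F = "\<lambda>p. case_prod F (basis_index p)"]) blast
  have "\<phi> (tp e f) = F e f" if "e \<in> XG" "f \<in> XA" for e f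
    using \<phi>_basis[of "tp e f"] that by (auto simp: tensor_basis_def basis_index_tp)
  then show ?thesis using that \<phi> by blast
qed

lemma tensor_basis_bilinear_extension:
  assumes "vector_space s"
  obtains \<beta> where "bilinear_map sT sT s \<beta>"
    "\<And>e f e' f'. e \<in> XG \<Longrightarrow> f \<in> XA \<Longrightarrow> e' \<in> XG \<Longrightarrow> f' \<in> XA \<Longrightarrow>
      \<beta> (tp e f) (tp e' f') = F e f e' f'"
proof -
  obtain \<beta> where \<beta>: "bilinear_map sT sT s \<beta>"
    and \<beta>_basis: "\<And>p q. p \<in> tensor_basis \<Longrightarrow> q \<in> tensor_basis \<Longrightarrow>
      \<beta> p q = (case basis_index p of (e, f) \<Rightarrow> case basis_index q of (e', f') \<Rightarrow> F e f e' f')"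
    by (rule bilinear_map_extension[OF T.vector_space_axioms T.vector_space_axioms assms
        tensor_basis_independent tensor_basis_independent,
        where F = "\<lambda>p q. case basis_index p of (e, f) \<Rightarrow> case basis_index q of (e', f') \<Rightarrow> F e f e' f'"]) blast
  have "\<beta> (tp e f) (tp e' f') = F e f e' f'" if "e \<in> XG" "f \<in> XA" "e' \<in> XG" "f' \<in> XA" for e f e' f'
    using \<beta>_basis[of "tp e f" "tp e' f'"] that by (auto simp: tensor_basis_def basis_index_tp)
  then show ?thesis using that \<beta> by blast
qed

lemma tensor_grading_eq_span_basis: "TG d = T.span {p\<in>tensor_basis. tensor_degree p = d}"
proof
  show "TG d \<subseteq> T.span {p\<in>tensor_basis. tensor_degree p = d}"
    unfolding tensor_grading_def
  proof (rule T.span_minimal[OF _ T.subspace_span], safe)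
    fix x a g h assume "x \<in> VG g" "a \<in> VA h" "d = g + h"
    then show "tp x a \<in> T.span {p\<in>tensor_basis. tensor_degree p = g + h}"
      unfolding VG_span VA_span
      by (rule_tac bilinear_map_into_subspace[OF tp_bilinear T.subspace_span])
         (auto intro!: T.span_base simp: tensor_basis_def tensor_degree_def basis_index_tp)
  qed
  show "T.span {p\<in>tensor_basis. tensor_degree p = d} \<subseteq> TG d"
  proof (rule T.span_minimal)
    show "{p\<in>tensor_basis. tensor_degree p = d} \<subseteq> TG d"
      using tp_mem_tensor_grading homogeneous_basis_mem[OF basis_G] homogeneous_basis_mem[OF basis_A]
      by (auto simp: tensor_basis_def tensor_degree_def basis_index_tp)
  qed (simp add: tensor_grading_def)
qed

lemma tensor_grading_graded: "graded_space sT TG"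
  using T.vector_space_axioms tensor_basis_independent span_tensor_basis tensor_grading_eq_span_basis
  by (intro homogeneous_basis_graded_space[of _ _ tensor_basis tensor_degree])
     (simp add: homogeneous_basis_def)

lemma span_homogeneous_tensors: "T.span {tp x a | x a g h. x \<in> VG g \<and> a \<in> VA h} = UNIV"
proof -
  have "tensor_basis \<subseteq> {tp x a | x a g h. x \<in> VG g \<and> a \<in> VA h}"
    using homogeneous_basis_mem[OF basis_G] homogeneous_basis_mem[OF basis_A]
    unfolding tensor_basis_def by fast
  then show ?thesis using T.span_mono span_tensor_basis by blast
qed

lemma homogeneous_eq_on_basis:
  assumes "x \<in> VG g1" "a \<in> VA h1" "y \<in> VG g2" "b \<in> VA h2"
    and "\<And>y b. bilinear_map sG sA s (\<lambda>x a. P x a y b)" "\<And>y b. bilinear_map sG sA s (\<lambda>x a. Q x a y b)"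
    and "\<And>x a. bilinear_map sG sA s (P x a)" "\<And>x a. bilinear_map sG sA s (Q x a)"
    and "\<And>e f e' f'. e \<in> XG \<Longrightarrow> f \<in> XA \<Longrightarrow> e' \<in> XG \<Longrightarrow> f' \<in> XA \<Longrightarrow>
      degG e = g1 \<Longrightarrow> degA f = h1 \<Longrightarrow> degG e' = g2 \<Longrightarrow> degA f' = h2 \<Longrightarrow> P e f e' f' = Q e f e' f'"
  shows "P x a y b = Q x a y b"
  using assms unfolding VG_span VA_span
  by (intro bilinear_pairs_eq_on_span[of x sG _ a sA _ y _ b _ s P Q]) auto

lemma representation_partial_coordinate:
  assumes \<pi>: "Vector_Spaces.linear sT sG \<pi>"
    and \<pi>_tp: "\<And>e f. e \<in> XG \<Longrightarrow> f \<in> XA \<Longrightarrow> \<pi> (tp e f) = (if f = f0 then e else 0)"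
    and e0: "e0 \<in> XG" and f0: "f0 \<in> XA"
  shows "G.representation XG (\<pi> u) e0 = T.representation tensor_basis u (tp e0 f0)"
proof (rule linear_eq_on_span[of sT "(*)" _ _ u tensor_basis])
  show "Vector_Spaces.linear sT (*) (\<lambda>u. G.representation XG (\<pi> u) e0)"
    by (rule linear_compose_lambda[OF \<pi> G.linear_representation[OF XG_independent span_XG]])
  show "Vector_Spaces.linear sT (*) (\<lambda>u. T.representation tensor_basis u (tp e0 f0))"
    by (rule T.linear_representation[OF tensor_basis_independent span_tensor_basis])
  show "u \<in> T.span tensor_basis" by (simp add: span_tensor_basis)
  fix p assume "p \<in> tensor_basis"
  then obtain e f where ef: "e \<in> XG" "f \<in> XA" "p = tp e f" by (auto simp: tensor_basis_def)
  have "T.representation tensor_basis p = (\<lambda>q. if q = p then 1 else 0)"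
    by (rule T.representation_basis[OF tensor_basis_independent \<open>p \<in> tensor_basis\<close>])
  moreover have "tp e0 f0 = tp e f \<longleftrightarrow> e0 = e \<and> f0 = f"
    using tp_inj_on ef e0 f0 by (auto simp: inj_on_def)
  ultimately have "T.representation tensor_basis p (tp e0 f0) = (if e0 = e \<and> f0 = f then 1 else 0)"
    using ef by simp
  then show "G.representation XG (\<pi> p) e0 = T.representation tensor_basis p (tp e0 f0)"
    using ef by (simp add: \<pi>_tp G.representation_basis[OF XG_independent] G.representation_zero)
qed

end

section \<open>The current algebra\<close>

lemma bicharacter_nonzero: "bicharacter eps \<Longrightarrow> eps a b \<noteq> 0"
  and bicharacter_add_left: "bicharacter eps \<Longrightarrow> eps (a + b) c = eps a c * eps b c"
  and bicharacter_add_right: "bicharacter eps \<Longrightarrow> eps a (b + c) = eps a b * eps a c"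
  by (simp_all add: bicharacter_def)

lemma bicharacter_swap: "bicharacter eps \<Longrightarrow> eps b a = inverse (eps a b)"
  unfolding bicharacter_def by (metis inverse_unique mult.commute)

locale current_algebra = graded_tensor sG VG sA VA sT tp XG degG XA degA
  for sG :: "'k::field \<Rightarrow> 'g::ab_group_add \<Rightarrow> 'g" and VG :: "'c::ab_group_add \<Rightarrow> 'g set"
    and sA :: "'k \<Rightarrow> 'a::ab_group_add \<Rightarrow> 'a" and VA :: "'c \<Rightarrow> 'a set"
    and sT :: "'k \<Rightarrow> 't::ab_group_add \<Rightarrow> 't" and tp :: "'g \<Rightarrow> 'a \<Rightarrow> 't"
    and XG degG XA degA +
  fixes eps :: "'c \<Rightarrow> 'c \<Rightarrow> 'k"
    and mu :: "'a \<Rightarrow> 'a \<Rightarrow> 'a" and alA :: "'a \<Rightarrow> 'a"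
    and brG :: "'g \<Rightarrow> 'g \<Rightarrow> 'g" and alG :: "'g \<Rightarrow> 'g"
  assumes bicharacter: "bicharacter eps"
    and algebra: "comm_color_hom_assoc sA VA mu alA eps"
    and lie: "color_hom_lie sG VG brG alG eps"
begin

lemmas eps_nonzero = bicharacter_nonzero[OF bicharacter]
  and eps_add_left = bicharacter_add_left[OF bicharacter]
  and eps_add_right = bicharacter_add_right[OF bicharacter]
  and eps_swap = bicharacter_swap[OF bicharacter]

lemma mu_bilinear: "bilinear_map sA sA sA mu"
  and alA_linear: "Vector_Spaces.linear sA sA alA"
  and mu_homogeneous: "a \<in> VA g \<Longrightarrow> b \<in> VA h \<Longrightarrow> mu a b \<in> VA (g + h)"
  and alA_homogeneous: "a \<in> VA g \<Longrightarrow> alA a \<in> VA g"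
  and mu_hom_assoc: "mu (alA a) (mu b c) = mu (mu a b) (alA c)"
  and mu_commute: "a \<in> VA g \<Longrightarrow> b \<in> VA h \<Longrightarrow> mu a b = sA (eps g h) (mu b a)"
  using algebra unfolding comm_color_hom_assoc_def by metis+

lemma brG_bilinear: "bilinear_map sG sG sG brG"
  and alG_linear: "Vector_Spaces.linear sG sG alG"
  and brG_homogeneous: "x \<in> VG g \<Longrightarrow> y \<in> VG h \<Longrightarrow> brG x y \<in> VG (g + h)"
  and alG_homogeneous: "x \<in> VG g \<Longrightarrow> alG x \<in> VG g"
  and brG_skew: "x \<in> VG g \<Longrightarrow> y \<in> VG h \<Longrightarrow> brG x y = - sG (eps g h) (brG y x)"
  and brG_jacobi: "x \<in> VG g \<Longrightarrow> y \<in> VG h \<Longrightarrow> z \<in> VG k \<Longrightarrow>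
    sG (eps k g) (brG (alG x) (brG y z)) + sG (eps g h) (brG (alG y) (brG z x))
      + sG (eps h k) (brG (alG z) (brG x y)) = 0"
  using lie unfolding color_hom_lie_def by metis+

lemma homogeneous_basis_elements:
  "e \<in> XG \<Longrightarrow> e \<in> VG (degG e)" "f \<in> XA \<Longrightarrow> f \<in> VA (degA f)"
  by (simp_all add: homogeneous_basis_mem[OF basis_G] homogeneous_basis_mem[OF basis_A])

lemma tensor_bracket_exists: "\<exists>br. tensor_bracket sT tp VG VA eps brG mu br"
proof -
  obtain br where br: "bilinear_map sT sT sT br"
    and br_basis: "\<And>e f e' f'. e \<in> XG \<Longrightarrow> f \<in> XA \<Longrightarrow> e' \<in> XG \<Longrightarrow> f' \<in> XA \<Longrightarrow>
      br (tp e f) (tp e' f') = sT (eps (degA f) (degG e')) (tp (brG e e') (mu f f'))"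
    by (rule tensor_basis_bilinear_extension[OF T.vector_space_axioms,
          where F = "\<lambda>e f e' f'. sT (eps (degA f) (degG e')) (tp (brG e e') (mu f f'))"]) blast
  have "br (tp x a) (tp y b) = sT (eps h1 g2) (tp (brG x y) (mu a b))"
    if "x \<in> VG g1" "a \<in> VA h1" "y \<in> VG g2" "b \<in> VA h2" for g1 h1 g2 h2 x a y b
  proof (rule homogeneous_eq_on_basis[OF that])
    show "bilinear_map sG sA sT (\<lambda>x a. br (tp x a) (tp y b))" for y b
      by (rule linear_compose_bilinear_map[OF bilinear_map_linear_left[OF br] tp_bilinear])
    show "bilinear_map sG sA sT (\<lambda>y b. br (tp x a) (tp y b))" for x a
      by (rule linear_compose_bilinear_map[OF bilinear_map_linear_right[OF br] tp_bilinear])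
    show "bilinear_map sG sA sT (\<lambda>x a. sT (eps h1 g2) (tp (brG x y) (mu a b)))" for y b
      by (rule linear_compose_bilinear_map[OF T.linear_scale_self bilinear_map_compose_linear[OF
            tp_bilinear bilinear_map_linear_left[OF brG_bilinear] bilinear_map_linear_left[OF mu_bilinear]]])
    show "bilinear_map sG sA sT (\<lambda>y b. sT (eps h1 g2) (tp (brG x y) (mu a b)))" for x a
      by (rule linear_compose_bilinear_map[OF T.linear_scale_self bilinear_map_compose_linear[OF
            tp_bilinear bilinear_map_linear_right[OF brG_bilinear] bilinear_map_linear_right[OF mu_bilinear]]])
  qed (simp add: br_basis)
  then show ?thesis using br unfolding tensor_bracket_def by blast
qed

lemma tensor_twist_exists: "\<exists>al. tensor_twist sT tp alG alA al"
proof -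
  obtain al where al: "Vector_Spaces.linear sT sT al"
    and al_basis: "\<And>e f. e \<in> XG \<Longrightarrow> f \<in> XA \<Longrightarrow> al (tp e f) = tp (alG e) (alA f)"
    by (rule tensor_basis_linear_extension[OF T.vector_space_axioms,
          where F = "\<lambda>e f. tp (alG e) (alA f)"]) blast
  have "al (tp x a) = tp (alG x) (alA a)" for x a
  proof (rule bilinear_map_eq_on_span[of sG sA sT _ _ x XG a XA])
    show "bilinear_map sG sA sT (\<lambda>x a. al (tp x a))"
      by (rule linear_compose_bilinear_map[OF al tp_bilinear])
    show "bilinear_map sG sA sT (\<lambda>x a. tp (alG x) (alA a))"
      by (rule bilinear_map_compose_linear[OF tp_bilinear alG_linear alA_linear])
  qed (simp_all add: span_XG span_XA al_basis)
  then show ?thesis using al unfolding tensor_twist_def by blast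
qed

lemma tensor_form_exists:
  assumes BG: "bilinear_map sG sG (*) BG" and BA: "bilinear_map sA sA (*) BA"
  shows "\<exists>B. tensor_form sT tp VG VA eps BG BA B"
proof -
  obtain B where B: "bilinear_map sT sT (*) B"
    and B_basis: "\<And>e f e' f'. e \<in> XG \<Longrightarrow> f \<in> XA \<Longrightarrow> e' \<in> XG \<Longrightarrow> f' \<in> XA \<Longrightarrow>
      B (tp e f) (tp e' f') = eps (degA f) (degG e') * BG e e' * BA f f'"
    by (rule tensor_basis_bilinear_extension[OF vector_space_field,
          where F = "\<lambda>e f e' f'. eps (degA f) (degG e') * BG e e' * BA f f'"]) blast
  have "B (tp x a) (tp y b) = eps h1 g2 * BG x y * BA a b"
    if "x \<in> VG g1" "a \<in> VA h1" "y \<in> VG g2" "b \<in> VA h2" for g1 h1 g2 h2 x a y b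
  proof (rule homogeneous_eq_on_basis[OF that])
    show "bilinear_map sG sA (*) (\<lambda>x a. B (tp x a) (tp y b))" for y b
      by (rule linear_compose_bilinear_map[OF bilinear_map_linear_left[OF B] tp_bilinear])
    show "bilinear_map sG sA (*) (\<lambda>y b. B (tp x a) (tp y b))" for x a
      by (rule linear_compose_bilinear_map[OF bilinear_map_linear_right[OF B] tp_bilinear])
    show "bilinear_map sG sA (*) (\<lambda>x a. eps h1 g2 * BG x y * BA a b)" for y b
      by (rule bilinear_map_compose_linear[OF bilinear_map_times
            linear_compose_scale_right[OF bilinear_map_linear_left[OF BG]] bilinear_map_linear_left[OF BA]])
    show "bilinear_map sG sA (*) (\<lambda>y b. eps h1 g2 * BG x y * BA a b)" for x a
      by (rule bilinear_map_compose_linear[OF bilinear_map_times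
            linear_compose_scale_right[OF bilinear_map_linear_right[OF BG]] bilinear_map_linear_right[OF BA]])
  qed (simp add: B_basis)
  then show ?thesis using B unfolding tensor_form_def by blast
qed

end

locale current_color_hom_lie = current_algebra +
  fixes br and al
  assumes bracket: "tensor_bracket sT tp VG VA eps brG mu br"
    and twist: "tensor_twist sT tp alG alA al"
begin

lemma br_bilinear: "bilinear_map sT sT sT br"
  using bracket by (simp add: tensor_bracket_def)

lemma br_tp: "x \<in> VG g1 \<Longrightarrow> a \<in> VA h1 \<Longrightarrow> y \<in> VG g2 \<Longrightarrow> b \<in> VA h2 \<Longrightarrow>
    br (tp x a) (tp y b) = sT (eps h1 g2) (tp (brG x y) (mu a b))"
  using bracket unfolding tensor_bracket_def by blast

lemma al_linear: "Vector_Spaces.linear sT sT al"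
  and al_tp: "al (tp x a) = tp (alG x) (alA a)"
  using twist by (simp_all add: tensor_twist_def)

lemma tp_scale_left: "tp (sG c x) a = sT c (tp x a)"
  and tp_scale_right: "tp x (sA c a) = sT c (tp x a)"
  and tp_add_left: "tp (x + y) a = tp x a + tp y a"
  using bilinear_map_linear_left[OF tp_bilinear] bilinear_map_linear_right[OF tp_bilinear]
  by (simp_all add: linear_iff)

lemma tp_neg_left: "tp (- x) a = - tp x a"
  and tp_zero_left: "tp 0 a = 0"
  using module_hom.neg[OF module_hom_linearI[OF bilinear_map_linear_left[OF tp_bilinear]]]
    module_hom.zero[OF module_hom_linearI[OF bilinear_map_linear_left[OF tp_bilinear]]]
  by simp_all

lemma br_scale_right: "br u (sT c v) = sT c (br u v)"
  using bilinear_map_linear_right[OF br_bilinear] by (simp add: linear_iff)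

lemma tensor_grading_span: "u \<in> TG d \<Longrightarrow> u \<in> T.span {tp x a | x a g h. g + h = d \<and> x \<in> VG g \<and> a \<in> VA h}"
  by (simp add: tensor_grading_def)

lemma bracket_tensor_grading:
  assumes "u \<in> TG g" "v \<in> TG h"
  shows "br u v \<in> TG (g + h)"
proof (rule bilinear_map_into_subspace[OF br_bilinear _ tensor_grading_span[OF assms(1)]
      tensor_grading_span[OF assms(2)]])
  show "T.subspace (TG (g + h))" by (simp add: tensor_grading_def)
  fix p q
  assume "p \<in> {tp x a | x a g' h'. g' + h' = g \<and> x \<in> VG g' \<and> a \<in> VA h'}"
    and "q \<in> {tp x a | x a g' h'. g' + h' = h \<and> x \<in> VG g' \<and> a \<in> VA h'}"
  then obtain x a y b g1 h1 g2 h2 where p: "p = tp x a" "x \<in> VG g1" "a \<in> VA h1" "g1 + h1 = g"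
    and q: "q = tp y b" "y \<in> VG g2" "b \<in> VA h2" "g2 + h2 = h"
    by blast
  have "tp (brG x y) (mu a b) \<in> TG ((g1 + g2) + (h1 + h2))"
    using p q by (intro tp_mem_tensor_grading brG_homogeneous mu_homogeneous)
  moreover have "(g1 + g2) + (h1 + h2) = g + h" using p q by (simp add: algebra_simps)
  ultimately show "br p q \<in> TG (g + h)"
    using p q by (simp add: br_tp T.subspace_scale tensor_grading_def)
qed

lemma twist_tensor_grading:
  assumes "u \<in> TG g"
  shows "al u \<in> TG g"
proof (rule linear_map_into_subspace[OF al_linear _ tensor_grading_span[OF assms]])
  show "T.subspace (TG g)" by (simp add: tensor_grading_def)
  fix p assume "p \<in> {tp x a | x a g' h'. g' + h' = g \<and> x \<in> VG g' \<and> a \<in> VA h'}"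
  then obtain x a g1 h1 where "p = tp x a" "x \<in> VG g1" "a \<in> VA h1" "g1 + h1 = g"
    by blast
  then show "al p \<in> TG g"
    using tp_mem_tensor_grading[OF alG_homogeneous alA_homogeneous] by (auto simp: al_tp)
qed

lemma bracket_skew:
  assumes "u \<in> TG g" "v \<in> TG h"
  shows "br u v = - sT (eps g h) (br v u)"
proof (rule bilinear_map_eq_on_span[OF br_bilinear _ tensor_grading_span[OF assms(1)]
      tensor_grading_span[OF assms(2)]])
  show "bilinear_map sT sT sT (\<lambda>u v. - sT (eps g h) (br v u))"
    by (rule linear_compose_bilinear_map[OF linear_compose_neg[OF T.linear_scale_self]
          bilinear_map_swap[OF br_bilinear]])
  fix p q
  assume "p \<in> {tp x a | x a g' h'. g' + h' = g \<and> x \<in> VG g' \<and> a \<in> VA h'}"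
    and "q \<in> {tp x a | x a g' h'. g' + h' = h \<and> x \<in> VG g' \<and> a \<in> VA h'}"
  then obtain x a y b g1 h1 g2 h2 where p: "p = tp x a" "x \<in> VG g1" "a \<in> VA h1" "g = g1 + h1"
    and q: "q = tp y b" "y \<in> VG g2" "b \<in> VA h2" "h = g2 + h2"
    by blast
  have "tp (brG x y) (mu a b) = - sT (eps g1 g2 * eps h1 h2) (tp (brG y x) (mu b a))"
    unfolding brG_skew[OF p(2) q(2)] mu_commute[OF p(3) q(3)]
    by (simp add: tp_neg_left tp_scale_left tp_scale_right)
  moreover have "eps h1 g2 * (eps g1 g2 * eps h1 h2) = eps (g1 + h1) (g2 + h2) * eps h2 g1"
    by (simp add: eps_add_left eps_add_right eps_swap[of g1 h2] eps_nonzero field_simps)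
  ultimately show "br p q = - sT (eps g h) (br q p)"
    using p q by (simp add: br_tp T.scale_minus_right)
qed

text \<open>All three terms are multiples of pure tensors with the same second factor
  $\mu(\alpha_A(a_1),\mu(a_2,a_3))$, by Hom-associativity and commutativity of $A$; after
  extracting a common scalar the sum becomes the Hom-Jacobi identity of $\mathfrak g$ tensored with it.\<close>
lemma jacobi_tp:
  assumes x: "x1 \<in> VG g1" "x2 \<in> VG g2" "x3 \<in> VG g3"
    and a: "a1 \<in> VA h1" "a2 \<in> VA h2" "a3 \<in> VA h3"
  shows "sT (eps (g3 + h3) (g1 + h1)) (br (al (tp x1 a1)) (br (tp x2 a2) (tp x3 a3)))
       + sT (eps (g1 + h1) (g2 + h2)) (br (al (tp x2 a2)) (br (tp x3 a3) (tp x1 a1)))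
       + sT (eps (g2 + h2) (g3 + h3)) (br (al (tp x3 a3)) (br (tp x1 a1) (tp x2 a2))) = 0"
proof -
  have ax: "alG x1 \<in> VG g1" "alG x2 \<in> VG g2" "alG x3 \<in> VG g3"
    and aa: "alA a1 \<in> VA h1" "alA a2 \<in> VA h2" "alA a3 \<in> VA h3"
    using x a alG_homogeneous alA_homogeneous by auto
  define m where "m = mu (alA a1) (mu a2 a3)"
  define J1 where "J1 = brG (alG x1) (brG x2 x3)"
  define J2 where "J2 = brG (alG x2) (brG x3 x1)"
  define J3 where "J3 = brG (alG x3) (brG x1 x2)"
  define L where "L = eps h3 g1 * eps h3 h1 * eps h2 g3 * eps h1 g2"
  have "mu (alA a2) (mu a3 a1) = mu (mu a2 a3) (alA a1)" by (rule mu_hom_assoc)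
  also have "\<dots> = sA (eps (h2 + h3) h1) m"
    unfolding m_def by (rule mu_commute[OF mu_homogeneous[OF a(2,3)] aa(1)])
  finally have m2: "mu (alA a2) (mu a3 a1) = sA (eps (h2 + h3) h1) m" .
  have "mu (alA a3) (mu a1 a2) = sA (eps h3 (h1 + h2)) (mu (mu a1 a2) (alA a3))"
    by (rule mu_commute[OF aa(3) mu_homogeneous[OF a(1,2)]])
  also have "mu (mu a1 a2) (alA a3) = m" unfolding m_def by (rule mu_hom_assoc[symmetric])
  finally have m3: "mu (alA a3) (mu a1 a2) = sA (eps h3 (h1 + h2)) m" .
  have T1: "br (al (tp x1 a1)) (br (tp x2 a2) (tp x3 a3)) = sT (eps h2 g3 * eps h1 (g2 + g3)) (tp J1 m)"
    by (simp add: br_tp[OF x(2) a(2) x(3) a(3)] al_tp br_scale_right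
        br_tp[OF ax(1) aa(1) brG_homogeneous[OF x(2,3)] mu_homogeneous[OF a(2,3)]] J1_def m_def)
  have T2: "br (al (tp x2 a2)) (br (tp x3 a3) (tp x1 a1)) =
      sT (eps h3 g1 * (eps h2 (g3 + g1) * eps (h2 + h3) h1)) (tp J2 m)"
    by (simp add: br_tp[OF x(3) a(3) x(1) a(1)] al_tp br_scale_right
        br_tp[OF ax(2) aa(2) brG_homogeneous[OF x(3,1)] mu_homogeneous[OF a(3,1)]] J2_def m2 tp_scale_right)
  have T3: "br (al (tp x3 a3)) (br (tp x1 a1) (tp x2 a2)) =
      sT (eps h1 g2 * (eps h3 (g1 + g2) * eps h3 (h1 + h2))) (tp J3 m)"
    by (simp add: br_tp[OF x(1) a(1) x(2) a(2)] al_tp br_scale_right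
        br_tp[OF ax(3) aa(3) brG_homogeneous[OF x(1,2)] mu_homogeneous[OF a(1,2)]] J3_def m3 tp_scale_right)
  have s1: "eps (g3 + h3) (g1 + h1) * (eps h2 g3 * eps h1 (g2 + g3)) = L * eps g3 g1"
    unfolding L_def by (simp add: eps_add_left eps_add_right eps_swap[of h1 g3] eps_nonzero field_simps)
  have s2: "eps (g1 + h1) (g2 + h2) * (eps h3 g1 * (eps h2 (g3 + g1) * eps (h2 + h3) h1)) = L * eps g1 g2"
    unfolding L_def
    by (simp add: eps_add_left eps_add_right eps_swap[of g1 h2] eps_swap[of h1 h2] eps_nonzero field_simps)
  have s3: "eps (g2 + h2) (g3 + h3) * (eps h1 g2 * (eps h3 (g1 + g2) * eps h3 (h1 + h2))) = L * eps g2 g3"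
    unfolding L_def
    by (simp add: eps_add_left eps_add_right eps_swap[of g2 h3] eps_swap[of h2 h3] eps_nonzero field_simps)
  have "sG (eps g3 g1) J1 + sG (eps g1 g2) J2 + sG (eps g2 g3) J3 = 0"
    unfolding J1_def J2_def J3_def by (rule brG_jacobi[OF x])
  then have "tp (sG (eps g3 g1) J1 + sG (eps g1 g2) J2 + sG (eps g2 g3) J3) m = 0"
    by (simp add: tp_zero_left)
  then have "sT (eps g3 g1) (tp J1 m) + sT (eps g1 g2) (tp J2 m) + sT (eps g2 g3) (tp J3 m) = 0"
    by (simp add: tp_add_left tp_scale_left)
  then have "sT L (sT (eps g3 g1) (tp J1 m) + sT (eps g1 g2) (tp J2 m) + sT (eps g2 g3) (tp J3 m)) = 0"
    by simp
  then show ?thesis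
    unfolding T1 T2 T3 T.scale_scale s1 s2 s3 by (simp add: T.scale_right_distrib)
qed

lemma bracket_jacobi:
  assumes "u \<in> TG g" "v \<in> TG h" "w \<in> TG k"
  shows "sT (eps k g) (br (al u) (br v w)) + sT (eps g h) (br (al v) (br w u))
      + sT (eps h k) (br (al w) (br u v)) = 0"
proof (rule trilinear_eq_on_span[OF tensor_grading_span[OF assms(1)] tensor_grading_span[OF assms(2)]
      tensor_grading_span[OF assms(3)], where g = "\<lambda>u v w. 0" and s = sT])
  fix p q r
  assume "p \<in> {tp x a | x a g' h'. g' + h' = g \<and> x \<in> VG g' \<and> a \<in> VA h'}"
    and "q \<in> {tp x a | x a g' h'. g' + h' = h \<and> x \<in> VG g' \<and> a \<in> VA h'}"
    and "r \<in> {tp x a | x a g' h'. g' + h' = k \<and> x \<in> VG g' \<and> a \<in> VA h'}"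
  then obtain x1 a1 x2 a2 x3 a3 g1 h1 g2 h2 g3 h3
    where "p = tp x1 a1" "x1 \<in> VG g1" "a1 \<in> VA h1" "g = g1 + h1"
      and "q = tp x2 a2" "x2 \<in> VG g2" "a2 \<in> VA h2" "h = g2 + h2"
      and "r = tp x3 a3" "x3 \<in> VG g3" "a3 \<in> VA h3" "k = g3 + h3"
    by blast
  then show "sT (eps k g) (br (al p) (br q r)) + sT (eps g h) (br (al q) (br r p))
      + sT (eps h k) (br (al r) (br p q)) = 0"
    using jacobi_tp by simp
qed (intro linear_compose_add linear_compose_scale_right linear_zero T.vector_space_axioms
    linear_bilinear_map_left[OF br_bilinear al_linear]
    linear_bilinear_map_right[OF br_bilinear bilinear_map_linear_right[OF br_bilinear]]
    linear_bilinear_map_right[OF br_bilinear bilinear_map_linear_left[OF br_bilinear]]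
    bilinear_map_linear_right[OF br_bilinear])+

lemma color_hom_lie: "color_hom_lie sT TG br al eps"
  unfolding color_hom_lie_def
  using tensor_grading_graded br_bilinear al_linear bracket_tensor_grading twist_tensor_grading
    bracket_skew bracket_jacobi
  by blast

end

locale quadratic_current = current_color_hom_lie +
  fixes BA and BG and B
  assumes assoc_form: "assoc_scalar_product sA VA mu alA eps BA"
    and invariant_form: "invariant_scalar_product sG VG brG alG eps BG"
    and form: "tensor_form sT tp VG VA eps BG BA B"
begin

lemma BA_bilinear: "bilinear_map sA sA (*) BA"
  and BA_nondegenerate: "(\<forall>b. BA a b = 0) \<Longrightarrow> a = 0"
  and BA_eps_symmetric: "a \<in> VA g \<Longrightarrow> b \<in> VA h \<Longrightarrow> BA a b = eps g h * BA b a"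
  and BA_assoc: "BA (mu a b) c = BA a (mu b c)"
  and BA_alA: "BA (alA a) b = BA a (alA b)"
  using assoc_form unfolding assoc_scalar_product_def eps_scalar_form_def by metis+

lemma BA_scale_left: "BA (sA c a) b = c * BA a b"
  using bilinear_map_linear_left[OF BA_bilinear] by (simp add: linear_iff)

lemma BG_bilinear: "bilinear_map sG sG (*) BG"
  and BG_nondegenerate: "(\<forall>y. BG x y = 0) \<Longrightarrow> x = 0"
  and BG_eps_symmetric: "x \<in> VG g \<Longrightarrow> y \<in> VG h \<Longrightarrow> BG x y = eps g h * BG y x"
  and BG_invariant: "BG (brG x y) z = BG x (brG y z)"
  and BG_alG: "BG (alG x) y = BG x (alG y)"
  using invariant_form unfolding invariant_scalar_product_def eps_scalar_form_def by metis+

lemma B_bilinear: "bilinear_map sT sT (*) B"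
  using form by (simp add: tensor_form_def)

lemma B_tp: "x \<in> VG g1 \<Longrightarrow> a \<in> VA h1 \<Longrightarrow> y \<in> VG g2 \<Longrightarrow> b \<in> VA h2 \<Longrightarrow>
    B (tp x a) (tp y b) = eps h1 g2 * BG x y * BA a b"
  using form unfolding tensor_form_def by blast

lemma B_scale_left: "B (sT c u) v = c * B u v"
  and B_scale_right: "B u (sT c v) = c * B u v"
  using bilinear_map_linear_left[OF B_bilinear] bilinear_map_linear_right[OF B_bilinear]
  by (simp_all add: linear_iff)

lemma form_eps_symmetric:
  assumes "u \<in> TG g" "v \<in> TG h"
  shows "B u v = eps g h * B v u"
proof (rule bilinear_map_eq_on_span[OF B_bilinear _ tensor_grading_span[OF assms(1)]
      tensor_grading_span[OF assms(2)]])
  show "bilinear_map sT sT (*) (\<lambda>u v. eps g h * B v u)"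
    by (rule linear_compose_bilinear_map[OF vector_space.linear_scale_self[OF vector_space_field]
          bilinear_map_swap[OF B_bilinear]])
  fix p q
  assume "p \<in> {tp x a | x a g' h'. g' + h' = g \<and> x \<in> VG g' \<and> a \<in> VA h'}"
    and "q \<in> {tp x a | x a g' h'. g' + h' = h \<and> x \<in> VG g' \<and> a \<in> VA h'}"
  then obtain x a y b g1 h1 g2 h2 where p: "p = tp x a" "x \<in> VG g1" "a \<in> VA h1" "g = g1 + h1"
    and q: "q = tp y b" "y \<in> VG g2" "b \<in> VA h2" "h = g2 + h2"
    by blast
  show "B p q = eps g h * B q p"
    unfolding p(1) q(1) B_tp[OF p(2,3) q(2,3)] B_tp[OF q(2,3) p(2,3)]
      BG_eps_symmetric[OF p(2) q(2)] BA_eps_symmetric[OF p(3) q(3)] p(4) q(4)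
    by (simp add: eps_add_left eps_add_right eps_swap[of g1 h2] eps_nonzero field_simps)
qed

lemma form_invariant: "B (br u v) w = B u (br v w)"
proof (rule trilinear_eq_on_span[of u sT _ v sT _ w sT _ "\<lambda>u v w. B (br u v) w" "\<lambda>u v w. B u (br v w)" "(*)"])
  let ?H = "{tp x a | x a g h. x \<in> VG g \<and> a \<in> VA h}"
  show "u \<in> T.span ?H" "v \<in> T.span ?H" "w \<in> T.span ?H"
    unfolding span_homogeneous_tensors by simp_all
  fix p q r assume "p \<in> ?H" "q \<in> ?H" "r \<in> ?H"
  then obtain x1 a1 x2 a2 x3 a3 g1 h1 g2 h2 g3 h3
    where p: "p = tp x1 a1" "x1 \<in> VG g1" "a1 \<in> VA h1"
      and q: "q = tp x2 a2" "x2 \<in> VG g2" "a2 \<in> VA h2"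
      and r: "r = tp x3 a3" "x3 \<in> VG g3" "a3 \<in> VA h3"
    by blast
  have "B (br p q) r = eps h1 g2 * (eps (h1 + h2) g3 * BG (brG x1 x2) x3 * BA (mu a1 a2) a3)"
    unfolding p(1) q(1) r(1) br_tp[OF p(2,3) q(2,3)] B_scale_left
    by (simp add: B_tp[OF brG_homogeneous[OF p(2) q(2)] mu_homogeneous[OF p(3) q(3)] r(2,3)])
  moreover have "B p (br q r) = eps h2 g3 * (eps h1 (g2 + g3) * BG x1 (brG x2 x3) * BA a1 (mu a2 a3))"
    unfolding p(1) q(1) r(1) br_tp[OF q(2,3) r(2,3)] B_scale_right
    by (simp add: B_tp[OF p(2,3) brG_homogeneous[OF q(2) r(2)] mu_homogeneous[OF q(3) r(3)]])
  ultimately show "B (br p q) r = B p (br q r)"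
    by (simp add: BG_invariant BA_assoc eps_add_left eps_add_right mult_ac)
qed (rule linear_bilinear_map_left[OF B_bilinear bilinear_map_linear_left[OF br_bilinear]]
      bilinear_map_linear_left[OF B_bilinear]
      linear_bilinear_map_left[OF B_bilinear bilinear_map_linear_right[OF br_bilinear]]
      linear_bilinear_map_right[OF B_bilinear bilinear_map_linear_left[OF br_bilinear]]
      bilinear_map_linear_right[OF B_bilinear]
      linear_bilinear_map_right[OF B_bilinear bilinear_map_linear_right[OF br_bilinear]])+

lemma form_twist_symmetric: "B (al u) v = B u (al v)"
proof (rule bilinear_map_eq_on_span[of sT sT "(*)" "\<lambda>u v. B (al u) v" "\<lambda>u v. B u (al v)"])
  let ?H = "{tp x a | x a g h. x \<in> VG g \<and> a \<in> VA h}"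
  show "bilinear_map sT sT (*) (\<lambda>u v. B (al u) v)"
    by (rule bilinear_map_compose_linear[OF B_bilinear al_linear T.linear_ident])
  show "bilinear_map sT sT (*) (\<lambda>u v. B u (al v))"
    by (rule bilinear_map_compose_linear[OF B_bilinear T.linear_ident al_linear])
  show "u \<in> T.span ?H" "v \<in> T.span ?H"
    unfolding span_homogeneous_tensors by simp_all
  fix p q assume "p \<in> ?H" "q \<in> ?H"
  then obtain x1 a1 x2 a2 g1 h1 g2 h2
    where p: "p = tp x1 a1" "x1 \<in> VG g1" "a1 \<in> VA h1"
      and q: "q = tp x2 a2" "x2 \<in> VG g2" "a2 \<in> VA h2"
    by blast
  show "B (al p) q = B p (al q)"
    unfolding p(1) q(1) al_tp
    by (simp add: B_tp[OF alG_homogeneous[OF p(2)] alA_homogeneous[OF p(3)] q(2,3)]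
        B_tp[OF p(2,3) alG_homogeneous[OF q(2)] alA_homogeneous[OF q(3)]] BG_alG BA_alA)
qed

lemma form_kernel_partial_coordinate:
  assumes t: "\<forall>v. B t v = 0"
    and \<pi>: "Vector_Spaces.linear sT sG \<pi>"
    and \<pi>_tp: "\<And>e f. e \<in> XG \<Longrightarrow> f \<in> XA \<Longrightarrow> \<pi> (tp e f) = (if f = f0 then e else 0)"
    and f0: "f0 \<in> XA" and y: "y \<in> XG"
  shows "BG (\<pi> t) y = 0"
proof -
  txt \<open>\<open>\<Phi>\<close> contracts the $\mathfrak g$-factor against \<open>y\<close>, so that \<open>BA (\<Phi> u) b = B u (tp y b)\<close>;
    the \<open>f0\<close>-coordinate of \<open>\<Phi> t = 0\<close> is a nonzero multiple of \<open>BG (\<pi> t) y\<close>.\<close>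
  obtain \<Phi> where \<Phi>: "Vector_Spaces.linear sT sA \<Phi>"
    and \<Phi>_tp: "\<And>e f. e \<in> XG \<Longrightarrow> f \<in> XA \<Longrightarrow> \<Phi> (tp e f) = sA (eps (degA f) (degG y) * BG e y) f"
    by (rule tensor_basis_linear_extension[OF A.vector_space_axioms,
          where F = "\<lambda>e f. sA (eps (degA f) (degG y) * BG e y) f"]) blast
  have contraction: "BA (\<Phi> u) b = B u (tp y b)" if b: "b \<in> XA" for u b
  proof (rule linear_eq_on_span[of sT "(*)" _ _ u tensor_basis])
    show "Vector_Spaces.linear sT (*) (\<lambda>u. BA (\<Phi> u) b)"
      by (rule linear_bilinear_map_left[OF BA_bilinear \<Phi>])
    show "Vector_Spaces.linear sT (*) (\<lambda>u. B u (tp y b))"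
      by (rule bilinear_map_linear_left[OF B_bilinear])
    show "u \<in> T.span tensor_basis" by (simp add: span_tensor_basis)
    fix p assume "p \<in> tensor_basis"
    then obtain e f where ef: "e \<in> XG" "f \<in> XA" "p = tp e f" by (auto simp: tensor_basis_def)
    then show "BA (\<Phi> p) b = B p (tp y b)"
      using ef b y
      by (simp add: \<Phi>_tp BA_scale_left B_tp[OF homogeneous_basis_elements(1,2) homogeneous_basis_elements(1,2)])
  qed
  have "BA (\<Phi> t) b = 0" for b
    by (rule linear_eq_on_span[of sA "(*)" "BA (\<Phi> t)" "\<lambda>b. 0" b XA])
       (simp_all add: bilinear_map_linear_right[OF BA_bilinear] linear_zero A.vector_space_axioms
         vector_space_field span_XA contraction t)
  then have \<Phi>_t: "\<Phi> t = 0" using BA_nondegenerate by blast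
  have coordinate: "A.representation XA (\<Phi> u) f0 = eps (degA f0) (degG y) * BG (\<pi> u) y" for u
  proof (rule linear_eq_on_span[of sT "(*)" _ _ u tensor_basis])
    show "Vector_Spaces.linear sT (*) (\<lambda>u. A.representation XA (\<Phi> u) f0)"
      by (rule linear_compose_lambda[OF \<Phi> A.linear_representation[OF XA_independent span_XA]])
    show "Vector_Spaces.linear sT (*) (\<lambda>u. eps (degA f0) (degG y) * BG (\<pi> u) y)"
      by (rule linear_compose_scale_right[OF linear_bilinear_map_left[OF BG_bilinear \<pi>]])
    show "u \<in> T.span tensor_basis" by (simp add: span_tensor_basis)
    fix p assume "p \<in> tensor_basis"
    then obtain e f where ef: "e \<in> XG" "f \<in> XA" "p = tp e f" by (auto simp: tensor_basis_def)
    have "A.representation XA (sA c f) f0 = (if f0 = f then c else 0)" for c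
      using A.representation_scale[OF XA_independent, of f c] A.representation_basis[OF XA_independent ef(2)]
      by (simp add: span_XA)
    moreover have "BG 0 y = 0"
      using module_hom.zero[OF module_hom_linearI[OF bilinear_map_linear_left[OF BG_bilinear, of y]]]
      by simp
    ultimately show "A.representation XA (\<Phi> p) f0 = eps (degA f0) (degG y) * BG (\<pi> p) y"
      using ef by (simp add: \<Phi>_tp \<pi>_tp)
  qed
  then have "eps (degA f0) (degG y) * BG (\<pi> t) y = 0"
    using coordinate[of t] by (simp add: \<Phi>_t A.representation_zero)
  then show ?thesis using eps_nonzero by simp
qed

lemma form_nondegenerate:
  assumes t: "\<forall>v. B t v = 0"
  shows "t = 0"
proof -
  have "T.representation tensor_basis t (tp e0 f0) = 0" if e0: "e0 \<in> XG" and f0: "f0 \<in> XA" for e0 f0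
  proof -
    obtain \<pi> where \<pi>: "Vector_Spaces.linear sT sG \<pi>"
      and \<pi>_tp: "\<And>e f. e \<in> XG \<Longrightarrow> f \<in> XA \<Longrightarrow> \<pi> (tp e f) = (if f = f0 then e else 0)"
      by (rule tensor_basis_linear_extension[OF G.vector_space_axioms,
            where F = "\<lambda>e f. if f = f0 then e else 0"]) blast
    have "BG (\<pi> t) y = 0" for y
      by (rule linear_eq_on_span[of sG "(*)" "BG (\<pi> t)" "\<lambda>y. 0" y XG])
         (simp_all add: bilinear_map_linear_right[OF BG_bilinear] linear_zero G.vector_space_axioms
           vector_space_field span_XG form_kernel_partial_coordinate[OF t \<pi> \<pi>_tp f0])
    then have "\<pi> t = 0" using BG_nondegenerate by blast
    then show ?thesis
      using representation_partial_coordinate[OF \<pi> \<pi>_tp e0 f0, of t] G.representation_zero by simp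
  qed
  then have "T.representation tensor_basis t q = 0" for q
    using T.representation_ne_zero[of tensor_basis t q] unfolding tensor_basis_def by fast
  then show "t = 0"
    using T.sum_nonzero_representation_eq[OF tensor_basis_independent, of t] span_tensor_basis by simp
qed

lemma quadratic_color_hom_lie: "quadratic_color_hom_lie sT TG br al eps B"
  unfolding quadratic_color_hom_lie_def invariant_scalar_product_def eps_scalar_form_def
  using color_hom_lie B_bilinear form_nondegenerate form_eps_symmetric form_invariant form_twist_symmetric
  by blast

end

theorem mainTheorem6:
  fixes eps :: "'c::ab_group_add \<Rightarrow> 'c \<Rightarrow> 'k::field_char_0"
    and sA :: "'k \<Rightarrow> 'a::ab_group_add \<Rightarrow> 'a" and VA :: "'c \<Rightarrow> 'a set"
    and mu :: "'a \<Rightarrow> 'a \<Rightarrow> 'a" and alA :: "'a \<Rightarrow> 'a"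
    and sG :: "'k \<Rightarrow> 'g::ab_group_add \<Rightarrow> 'g" and VG :: "'c \<Rightarrow> 'g set"
    and brG :: "'g \<Rightarrow> 'g \<Rightarrow> 'g" and alG :: "'g \<Rightarrow> 'g"
    and sT :: "'k \<Rightarrow> 't::ab_group_add \<Rightarrow> 't" and tp :: "'g \<Rightarrow> 'a \<Rightarrow> 't"
  assumes "bicharacter eps"
    and "comm_color_hom_assoc sA VA mu alA eps"
    and "color_hom_lie sG VG brG alG eps"
    and "tensor_product sG sA sT tp"
  shows "(\<exists>br al. tensor_bracket sT tp VG VA eps brG mu br \<and> tensor_twist sT tp alG alA al)
       \<and> (\<forall>br al. tensor_bracket sT tp VG VA eps brG mu br \<and> tensor_twist sT tp alG alA al
             \<longrightarrow> color_hom_lie sT (tensor_grading sT tp VG VA) br al eps)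
       \<and> (\<forall>BA BG. assoc_scalar_product sA VA mu alA eps BA
             \<and> invariant_scalar_product sG VG brG alG eps BG
             \<longrightarrow> (\<exists>B. tensor_form sT tp VG VA eps BG BA B)
               \<and> (\<forall>br al B. tensor_bracket sT tp VG VA eps brG mu br
                     \<and> tensor_twist sT tp alG alA al \<and> tensor_form sT tp VG VA eps BG BA B
                   \<longrightarrow> quadratic_color_hom_lie sT (tensor_grading sT tp VG VA) br al eps B))"
proof -
  obtain XG degG where basis_G: "homogeneous_basis sG VG XG degG"
    by (rule graded_space_homogeneous_basis[OF conjunct1[OF assms(3)[unfolded color_hom_lie_def]]])
  obtain XA degA where basis_A: "homogeneous_basis sA VA XA degA"
    by (rule graded_space_homogeneous_basis[OF conjunct1[OF assms(2)[unfolded comm_color_hom_assoc_def]]])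
  interpret current_algebra sG VG sA VA sT tp XG degG XA degA eps mu alA brG alG
    using assms basis_G basis_A by unfold_locales
  show ?thesis
  proof (intro conjI allI impI)
    show "\<exists>br al. tensor_bracket sT tp VG VA eps brG mu br \<and> tensor_twist sT tp alG alA al"
      using tensor_bracket_exists tensor_twist_exists by blast
  next
    fix br al
    assume "tensor_bracket sT tp VG VA eps brG mu br \<and> tensor_twist sT tp alG alA al"
    then interpret current_color_hom_lie sG VG sA VA sT tp XG degG XA degA eps mu alA brG alG br al
      by unfold_locales blast+
    show "color_hom_lie sT TG br al eps" by (rule color_hom_lie)
  next
    fix BA BG
    assume forms: "assoc_scalar_product sA VA mu alA eps BA \<and> invariant_scalar_product sG VG brG alG eps BG"
    then show "\<exists>B. tensor_form sT tp VG VA eps BG BA B"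
      by (intro tensor_form_exists)
         (simp_all add: assoc_scalar_product_def invariant_scalar_product_def eps_scalar_form_def)
    fix br al B
    assume "tensor_bracket sT tp VG VA eps brG mu br \<and> tensor_twist sT tp alG alA al
      \<and> tensor_form sT tp VG VA eps BG BA B"
    then interpret quadratic_current sG VG sA VA sT tp XG degG XA degA eps mu alA brG alG br al BA BG B
      using forms by unfold_locales blast+
    show "quadratic_color_hom_lie sT TG br al eps B" by (rule quadratic_color_hom_lie)
  qed
qed

end
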